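(* Let $\mathcal M=(\mathbf M^{(\lambda)})_{\lambda>0}$ be a weight matrix on $\mathbb N_0^d$. (i) If for every $\lambda>0$ there exist $0<\kappa\le\lambda$ and $A\ge1$ with $M^{(\kappa)}_{\alpha+e_j}\le A^{|\alpha|+1}M^{(\lambda)}_\alpha$ for all $\alpha\in\mathbb N_0^d$, $1\le j\le d$, then for every $\lambda>0$ and $N\in\mathbb N$ there exist $0<\kappa\le\lambda$ and $A,B\ge1$ such that $$\omega_{\mathbf M^{(\lambda)}}(t)+N\log|t|\le\omega_{\mathbf M^{(\kappa)}}(At)+B\quad\text{for all }t\in\mathbb R^d\setminus\{0\}.$$ (ii) If for every $\lambda>0$ there exist $\kappa\ge\lambda$ and $A\ge1$ with $M^{(\lambda)}_{\alpha+e_j}\le A^{|\alpha|+1}M^{(\kappa)}_\alpha$ for all $\alpha\in\mathbb N_0^d$, $1\le j\le d$, then for every $\lambda>0$ and $N\in\mathbb N$ there exist $\kappa\ge\lambda$ and $A,B\ge1$ such that $$\omega_{\mathbf M^{(\kappa)}}(t)+N\log|t|\le\omega_{\mathbf M^{(\lambda)}}(At)+B\quad\text{for all }t\in\mathbb R^d\setminus\{0\}.$$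
   Context: A weight matrix is a family $\mathcal M=(\mathbf M^{(\lambda)})_{\lambda>0}$ with $\mathbf M^{(\lambda)}=(M^{(\lambda)}_\alpha)_{\alpha\in\mathbb N_0^d}$ sequences of positive reals, $M^{(\lambda)}_0=1$, and $M^{(\lambda)}_\alpha\le M^{(\kappa)}_\alpha$ for all $\alpha$ whenever $0<\lambda\le\kappa$. $e_j$ is the $j$-th unit vector, $|\alpha|=\sum\alpha_j$, $|t|$ the Euclidean norm. The associated weight function of $\mathbf M=(M_\alpha)$ is $\omega_{\mathbf M}(t)=\sup_{\alpha\in\mathbb N^d_{0,t}}\log\frac{|t^\alpha|}{M_\alpha}$ ($t\in\mathbb R^d$, possibly $+\infty$), where $\mathbb N^d_{0,t}=\{\alpha:\alpha_j=0\text{ whenever }t_j=0\}$ and $0^0:=1$. *)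

theory Defs
  imports "HOL-Analysis.Analysis" "HOL-Library.Extended_Real"
begin

(* Multi-indices in N_0^d are functions 'n => nat for a finite index type 'n (d = CARD('n));
   points of R^d are real^'n. A weight matrix is M :: real => multi-index => real,
   M l = the sequence M^(l), meaningful for l > 0. *)

definition weight_matrix :: "(real \<Rightarrow> ('n::finite \<Rightarrow> nat) \<Rightarrow> real) \<Rightarrow> bool" where
  "weight_matrix M \<longleftrightarrow>
     (\<forall>l>0. (\<forall>\<alpha>. M l \<alpha> > 0) \<and> M l (\<lambda>_. 0) = 1) \<and>
     (\<forall>l k \<alpha>. 0 < l \<longrightarrow> l \<le> k \<longrightarrow> M l \<alpha> \<le> M k \<alpha>)"

definition mi_len :: "('n::finite \<Rightarrow> nat) \<Rightarrow> nat" where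
  "mi_len \<alpha> = (\<Sum>j\<in>UNIV. \<alpha> j)"

definition mi_succ :: "('n::finite \<Rightarrow> nat) \<Rightarrow> 'n \<Rightarrow> ('n \<Rightarrow> nat)" where
  "mi_succ \<alpha> j = \<alpha>(j := \<alpha> j + 1)"

definition mi_supp_set :: "real^'n \<Rightarrow> ('n::finite \<Rightarrow> nat) set" where
  "mi_supp_set t = {\<alpha>. \<forall>j. t $ j = 0 \<longrightarrow> \<alpha> j = 0}"

(* associated weight function, possibly +infinity; 0^0 = 1 in Isabelle *)
definition assoc_weight :: "(('n::finite \<Rightarrow> nat) \<Rightarrow> real) \<Rightarrow> real^'n \<Rightarrow> ereal" where
  "assoc_weight Ms t =
     (SUP \<alpha> \<in> mi_supp_set t. ereal (ln ((\<Prod>j\<in>UNIV. \<bar>t $ j\<bar> ^ \<alpha> j) / Ms \<alpha>)))"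

end

theory Submission
  imports Defs
begin

text \<open>For t \<noteq> 0 choose a coordinate j with norm t \<le> d \<bar>t j\<bar>, where d = CARD('n).
  Passing from \<alpha> to \<alpha> + e j multiplies the monomial \<bar>t\<bar>^\<alpha> by \<bar>t j\<bar> \<ge> norm t / d, and
  the hypothesis M \<kappa> (\<alpha> + e j) \<le> A^(|\<alpha>| + 1) M \<lambda> \<alpha> is paid for by evaluating at A t
  instead of t.  Hence one step along the weight matrix gives
  \<omega>(M \<lambda>, t) + log (norm t) \<le> \<omega>(M \<kappa>, A t) + log d (in (ii) with the roles of \<lambda> and \<kappa>
  exchanged).  Since A \<ge> 1 implies log (norm t) \<le> log (norm (A t)), such estimates compose,
  and N steps gain N log (norm t).\<close>

lemma mi_len_mi_succ: "mi_len (mi_succ \<alpha> j) = mi_len \<alpha> + 1"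
proof -
  have "mi_len (mi_succ \<alpha> j) = (\<alpha> j + 1) + (\<Sum>i\<in>UNIV-{j}. \<alpha> i)"
    unfolding mi_len_def by (subst sum.remove[of UNIV j]) (auto simp: mi_succ_def intro!: sum.cong)
  also have "\<dots> = mi_len \<alpha> + 1"
    unfolding mi_len_def using sum.remove[of UNIV j \<alpha>] by simp
  finally show ?thesis .
qed

lemma prod_power_mi_succ:
  fixes g :: "'n::finite \<Rightarrow> 'a::comm_monoid_mult"
  shows "(\<Prod>i\<in>UNIV. g i ^ mi_succ \<alpha> j i) = g j * (\<Prod>i\<in>UNIV. g i ^ \<alpha> i)"
proof -
  have "(\<Prod>i\<in>UNIV. g i ^ mi_succ \<alpha> j i) = g j ^ (\<alpha> j + 1) * (\<Prod>i\<in>UNIV-{j}. g i ^ \<alpha> i)"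
    by (subst prod.remove[of UNIV j]) (auto simp: mi_succ_def intro!: prod.cong)
  also have "\<dots> = g j * (\<Prod>i\<in>UNIV. g i ^ \<alpha> i)"
    using prod.remove[of UNIV j "\<lambda>i. g i ^ \<alpha> i"] by (simp add: mult.assoc)
  finally show ?thesis .
qed

lemma prod_abs_scaleR_power:
  fixes t :: "real^'n::finite"
  shows "(\<Prod>i\<in>UNIV. \<bar>(c *\<^sub>R t) $ i\<bar> ^ \<beta> i) = \<bar>c\<bar> ^ mi_len \<beta> * (\<Prod>i\<in>UNIV. \<bar>t $ i\<bar> ^ \<beta> i)"
  by (simp add: abs_mult power_mult_distrib prod.distrib power_sum mi_len_def)

lemma norm_le_card_mult_max_coordinate:
  fixes t :: "real^'n::finite"
  obtains j where "norm t \<le> real CARD('n) * \<bar>t $ j\<bar>"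
proof -
  obtain j where jmax: "\<And>i. \<bar>t $ i\<bar> \<le> \<bar>t $ j\<bar>"
    using Max_in[of "range (\<lambda>i. \<bar>t $ i\<bar>)"] Max_ge[of "range (\<lambda>i. \<bar>t $ i\<bar>)"] by fastforce
  have "norm t \<le> (\<Sum>i\<in>UNIV. \<bar>t $ i\<bar>)"
    by (rule norm_le_l1_cart)
  also have "\<dots> \<le> real CARD('n) * \<bar>t $ j\<bar>"
    using sum_bounded_above[of UNIV "\<lambda>i. \<bar>t $ i\<bar>"] jmax by simp
  finally show ?thesis by (rule that)
qed

definition assoc_weight_log_dominated ::
    "nat \<Rightarrow> (('n::finite \<Rightarrow> nat) \<Rightarrow> real) \<Rightarrow> (('n \<Rightarrow> nat) \<Rightarrow> real) \<Rightarrow> bool" where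
  "assoc_weight_log_dominated N P Q \<longleftrightarrow> (\<exists>A B. A \<ge> 1 \<and> B \<ge> 1 \<and>
     (\<forall>t::real^'n. t \<noteq> 0 \<longrightarrow>
        assoc_weight P t + ereal (real N * ln (norm t)) \<le> assoc_weight Q (A *\<^sub>R t) + ereal B))"

lemma assoc_weight_log_dominated_refl: "assoc_weight_log_dominated 0 P P"
proof -
  have "assoc_weight P t + ereal 0 \<le> assoc_weight P t + ereal 1" for t
    by (rule add_left_mono) simp
  then show ?thesis
    unfolding assoc_weight_log_dominated_def by (intro exI[of _ 1]) simp
qed

lemma assoc_weight_log_dominated_trans:
  fixes P Q R :: "('n::finite \<Rightarrow> nat) \<Rightarrow> real"
  assumes "assoc_weight_log_dominated N P Q" and "assoc_weight_log_dominated N' Q R"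
  shows "assoc_weight_log_dominated (N + N') P R"
proof -
  obtain A B where A: "A \<ge> 1" "B \<ge> 1" and PQ: "\<And>t::real^'n. t \<noteq> 0 \<Longrightarrow>
      assoc_weight P t + ereal (real N * ln (norm t)) \<le> assoc_weight Q (A *\<^sub>R t) + ereal B"
    using assms(1) unfolding assoc_weight_log_dominated_def by blast
  obtain A' B' where A': "A' \<ge> 1" "B' \<ge> 1" and QR: "\<And>t::real^'n. t \<noteq> 0 \<Longrightarrow>
      assoc_weight Q t + ereal (real N' * ln (norm t)) \<le> assoc_weight R (A' *\<^sub>R t) + ereal B'"
    using assms(2) unfolding assoc_weight_log_dominated_def by blast
  have "assoc_weight P t + ereal (real (N + N') * ln (norm t))
      \<le> assoc_weight R ((A' * A) *\<^sub>R t) + ereal (B + B')" if t: "t \<noteq> 0" for t :: "real^'n"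
  proof -
    have At: "A *\<^sub>R t \<noteq> 0" using t A by simp
    have ln_le: "real N' * ln (norm t) \<le> real N' * ln (norm (A *\<^sub>R t))"
      using t A by (intro mult_left_mono) (auto simp: ln_mult)
    have "assoc_weight P t + ereal (real (N + N') * ln (norm t))
        = (assoc_weight P t + ereal (real N * ln (norm t))) + ereal (real N' * ln (norm t))"
      by (simp add: distrib_right add.assoc)
    also have "\<dots> \<le> (assoc_weight Q (A *\<^sub>R t) + ereal B) + ereal (real N' * ln (norm (A *\<^sub>R t)))"
      using ln_le by (intro add_mono[OF PQ[OF t]]) simp
    also have "\<dots> = (assoc_weight Q (A *\<^sub>R t) + ereal (real N' * ln (norm (A *\<^sub>R t)))) + ereal B"
      by (simp add: ac_simps)
    also have "\<dots> \<le> (assoc_weight R (A' *\<^sub>R A *\<^sub>R t) + ereal B') + ereal B"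
      by (rule add_right_mono[OF QR[OF At]])
    also have "\<dots> = assoc_weight R ((A' * A) *\<^sub>R t) + ereal (B + B')"
      by (simp add: ac_simps flip: plus_ereal.simps(1))
    finally show ?thesis .
  qed
  moreover have "A' * A \<ge> 1"
    using mult_mono[of 1 A' 1 A] A A' by simp
  moreover have "B + B' \<ge> 1"
    using A A' by simp
  ultimately show ?thesis
    unfolding assoc_weight_log_dominated_def by blast
qed

lemma ln_monomial_mi_succ_le:
  fixes t :: "real^'n::finite" and P Q :: "('n \<Rightarrow> nat) \<Rightarrow> real"
  assumes t: "t \<noteq> 0" and j: "norm t \<le> real CARD('n) * \<bar>t $ j\<bar>"
    and \<alpha>: "\<alpha> \<in> mi_supp_set t" and pos: "P \<alpha> > 0" "Q (mi_succ \<alpha> j) > 0" and A: "A > 0"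
    and shift: "Q (mi_succ \<alpha> j) \<le> A ^ (mi_len \<alpha> + 1) * P \<alpha>"
  shows "ln ((\<Prod>i\<in>UNIV. \<bar>t $ i\<bar> ^ \<alpha> i) / P \<alpha>) + ln (norm t)
    \<le> ln ((\<Prod>i\<in>UNIV. \<bar>(A *\<^sub>R t) $ i\<bar> ^ mi_succ \<alpha> j i) / Q (mi_succ \<alpha> j)) + ln (real CARD('n))"
proof -
  define p where "p = (\<Prod>i\<in>UNIV. \<bar>t $ i\<bar> ^ \<alpha> i)"
  define a where "a = A ^ (mi_len \<alpha> + 1)"
  define d where "d = real CARD('n)"
  have p: "p > 0"
    unfolding p_def using \<alpha> by (intro prod_pos) (auto simp: mi_supp_set_def)
  have a: "a > 0"
    unfolding a_def using A by simp
  have norm_t: "norm t > 0"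
    using t by simp
  then have tj: "\<bar>t $ j\<bar> > 0" "d > 0"
    using j by (auto simp: d_def zero_less_mult_iff)
  have monomial: "(\<Prod>i\<in>UNIV. \<bar>(A *\<^sub>R t) $ i\<bar> ^ mi_succ \<alpha> j i) = a * (\<bar>t $ j\<bar> * p)"
    unfolding a_def p_def using A by (simp only: prod_abs_scaleR_power mi_len_mi_succ prod_power_mi_succ abs_of_pos)
  have "p * norm t / P \<alpha> \<le> p * (d * \<bar>t $ j\<bar>) / P \<alpha>"
    using j p pos by (intro divide_right_mono mult_left_mono) (auto simp: d_def)
  also have "\<dots> = a * (\<bar>t $ j\<bar> * p) * d / (a * P \<alpha>)"
    using a by (simp add: field_simps)
  also have "\<dots> \<le> a * (\<bar>t $ j\<bar> * p) * d / Q (mi_succ \<alpha> j)"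
    using shift pos p a tj by (intro divide_left_mono) (auto simp: a_def)
  finally have "ln (p * norm t / P \<alpha>) \<le> ln (a * (\<bar>t $ j\<bar> * p) * d / Q (mi_succ \<alpha> j))"
    using p pos norm_t by (intro ln_mono) auto
  then show ?thesis
    unfolding monomial p_def[symmetric] d_def[symmetric]
    using p pos norm_t a tj by (simp add: ln_mult ln_div)
qed

lemma assoc_weight_log_dominated_one:
  fixes P Q :: "('n::finite \<Rightarrow> nat) \<Rightarrow> real"
  assumes pos: "\<And>\<alpha>. P \<alpha> > 0" "\<And>\<alpha>. Q \<alpha> > 0" and A: "A \<ge> 1"
    and shift: "\<And>\<alpha> j. Q (mi_succ \<alpha> j) \<le> A ^ (mi_len \<alpha> + 1) * P \<alpha>"
  shows "assoc_weight_log_dominated 1 P Q"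
proof -
  define d where "d = real CARD('n)"
  have "assoc_weight P t + ereal (ln (norm t)) \<le> assoc_weight Q (A *\<^sub>R t) + ereal (1 + ln d)"
    if t: "t \<noteq> 0" for t :: "real^'n"
  proof -
    obtain j where j: "norm t \<le> d * \<bar>t $ j\<bar>"
      unfolding d_def by (rule norm_le_card_mult_max_coordinate)
    have "mi_supp_set t \<noteq> {}"
      unfolding mi_supp_set_def by auto
    then have "assoc_weight P t + ereal (ln (norm t)) = (SUP \<alpha> \<in> mi_supp_set t.
        ereal (ln ((\<Prod>i\<in>UNIV. \<bar>t $ i\<bar> ^ \<alpha> i) / P \<alpha>)) + ereal (ln (norm t)))"
      unfolding assoc_weight_def by (intro SUP_ereal_add_left[symmetric]) auto
    also have "\<dots> \<le> assoc_weight Q (A *\<^sub>R t) + ereal (ln d)"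
    proof (rule SUP_least)
      fix \<alpha> assume \<alpha>: "\<alpha> \<in> mi_supp_set t"
      have "t $ j \<noteq> 0"
        using j t by (metis abs_zero mult_zero_right norm_le_zero_iff)
      then have \<beta>: "mi_succ \<alpha> j \<in> mi_supp_set (A *\<^sub>R t)"
        using \<alpha> A by (auto simp: mi_supp_set_def mi_succ_def)
      have "ln ((\<Prod>i\<in>UNIV. \<bar>t $ i\<bar> ^ \<alpha> i) / P \<alpha>) + ln (norm t)
          \<le> ln ((\<Prod>i\<in>UNIV. \<bar>(A *\<^sub>R t) $ i\<bar> ^ mi_succ \<alpha> j i) / Q (mi_succ \<alpha> j)) + ln d"
        using A by (intro ln_monomial_mi_succ_le[where P = P and Q = Q,
            OF t j[unfolded d_def] \<alpha> pos _ shift, folded d_def]) simp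
      then have "ereal (ln ((\<Prod>i\<in>UNIV. \<bar>t $ i\<bar> ^ \<alpha> i) / P \<alpha>)) + ereal (ln (norm t))
          \<le> ereal (ln ((\<Prod>i\<in>UNIV. \<bar>(A *\<^sub>R t) $ i\<bar> ^ mi_succ \<alpha> j i) / Q (mi_succ \<alpha> j)))
            + ereal (ln d)"
        by simp
      also have "\<dots> \<le> assoc_weight Q (A *\<^sub>R t) + ereal (ln d)"
        unfolding assoc_weight_def using \<beta> by (intro add_right_mono SUP_upper)
      finally show "ereal (ln ((\<Prod>i\<in>UNIV. \<bar>t $ i\<bar> ^ \<alpha> i) / P \<alpha>)) + ereal (ln (norm t))
          \<le> assoc_weight Q (A *\<^sub>R t) + ereal (ln d)" .
    qed
    also have "\<dots> \<le> assoc_weight Q (A *\<^sub>R t) + ereal (1 + ln d)"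
      by (rule add_left_mono) simp
    finally show ?thesis .
  qed
  moreover have "1 + ln d \<ge> 1"
    by (simp add: d_def Suc_le_eq)
  ultimately show ?thesis
    unfolding assoc_weight_log_dominated_def using A by (intro exI[of _ A] exI[of _ "1 + ln d"]) simp
qed

lemma assoc_weight_log_dominated_iterate_down:
  fixes M :: "real \<Rightarrow> ('n::finite \<Rightarrow> nat) \<Rightarrow> real"
  assumes step: "\<And>l. l > 0 \<Longrightarrow> \<exists>k. 0 < k \<and> k \<le> l \<and> assoc_weight_log_dominated 1 (M l) (M k)"
    and "l > 0"
  shows "\<exists>k. 0 < k \<and> k \<le> l \<and> assoc_weight_log_dominated N (M l) (M k)"
  using \<open>l > 0\<close>
proof (induction N arbitrary: l)
  case 0
  then show ?case
    using assoc_weight_log_dominated_refl by blast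
next
  case (Suc N)
  obtain k where k: "0 < k" "k \<le> l" "assoc_weight_log_dominated 1 (M l) (M k)"
    using step[OF Suc.prems] by blast
  obtain k' where k': "0 < k'" "k' \<le> k" "assoc_weight_log_dominated N (M k) (M k')"
    using Suc.IH[OF k(1)] by blast
  have "assoc_weight_log_dominated (Suc N) (M l) (M k')"
    using assoc_weight_log_dominated_trans[OF k(3) k'(3)] by simp
  with k k' show ?case
    by (meson order_trans)
qed

lemma assoc_weight_log_dominated_iterate_up:
  fixes M :: "real \<Rightarrow> ('n::finite \<Rightarrow> nat) \<Rightarrow> real"
  assumes step: "\<And>l. l > 0 \<Longrightarrow> \<exists>k. l \<le> k \<and> assoc_weight_log_dominated 1 (M k) (M l)"
    and "l > 0"
  shows "\<exists>k. l \<le> k \<and> assoc_weight_log_dominated N (M k) (M l)"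
  using \<open>l > 0\<close>
proof (induction N arbitrary: l)
  case 0
  then show ?case
    using assoc_weight_log_dominated_refl by blast
next
  case (Suc N)
  obtain k where k: "l \<le> k" "assoc_weight_log_dominated 1 (M k) (M l)"
    using step[OF Suc.prems] by blast
  obtain k' where k': "k \<le> k'" "assoc_weight_log_dominated N (M k') (M k)"
    using Suc.IH[of k] k(1) Suc.prems by auto
  have "assoc_weight_log_dominated (Suc N) (M k') (M l)"
    using assoc_weight_log_dominated_trans[OF k'(2) k(2)] by simp
  with k k' show ?case
    by (meson order_trans)
qed

theorem lemma3p3:
  fixes M :: "real \<Rightarrow> ('n::finite \<Rightarrow> nat) \<Rightarrow> real"
  assumes "weight_matrix M"
  shows
   "((\<forall>l>0. \<exists>k A. 0 < k \<and> k \<le> l \<and> A \<ge> 1 \<and>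
        (\<forall>\<alpha> j. M k (mi_succ \<alpha> j) \<le> A ^ (mi_len \<alpha> + 1) * M l \<alpha>))
     \<longrightarrow> (\<forall>l>0. \<forall>N::nat. N \<ge> 1 \<longrightarrow> (\<exists>k A B. 0 < k \<and> k \<le> l \<and> A \<ge> 1 \<and> B \<ge> 1 \<and>
        (\<forall>t::real^'n. t \<noteq> 0 \<longrightarrow>
           assoc_weight (M l) t + ereal (real N * ln (norm t))
             \<le> assoc_weight (M k) (A *\<^sub>R t) + ereal B))))
   \<and>
    ((\<forall>l>0. \<exists>k A. k \<ge> l \<and> A \<ge> 1 \<and>
        (\<forall>\<alpha> j. M l (mi_succ \<alpha> j) \<le> A ^ (mi_len \<alpha> + 1) * M k \<alpha>))
     \<longrightarrow> (\<forall>l>0. \<forall>N::nat. N \<ge> 1 \<longrightarrow> (\<exists>k A B. k \<ge> l \<and> A \<ge> 1 \<and> B \<ge> 1 \<and>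
        (\<forall>t::real^'n. t \<noteq> 0 \<longrightarrow>
           assoc_weight (M k) t + ereal (real N * ln (norm t))
             \<le> assoc_weight (M l) (A *\<^sub>R t) + ereal B))))"
proof (intro conjI impI allI)
  have pos: "\<And>\<alpha>. M l \<alpha> > 0" if "l > 0" for l
    using assms that by (auto simp: weight_matrix_def)
  fix l :: real and N :: nat
  assume "l > 0"
  {
    assume "\<forall>l>0. \<exists>k A. 0 < k \<and> k \<le> l \<and> A \<ge> 1 \<and>
        (\<forall>\<alpha> j. M k (mi_succ \<alpha> j) \<le> A ^ (mi_len \<alpha> + 1) * M l \<alpha>)"
    then have "\<exists>k. 0 < k \<and> k \<le> l' \<and> assoc_weight_log_dominated 1 (M l') (M k)" if "l' > 0" for l'
      using that pos by (meson assoc_weight_log_dominated_one)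
    from assoc_weight_log_dominated_iterate_down[OF this \<open>l > 0\<close>]
    show "\<exists>k A B. 0 < k \<and> k \<le> l \<and> A \<ge> 1 \<and> B \<ge> 1 \<and>
        (\<forall>t::real^'n. t \<noteq> 0 \<longrightarrow>
           assoc_weight (M l) t + ereal (real N * ln (norm t))
             \<le> assoc_weight (M k) (A *\<^sub>R t) + ereal B)"
      unfolding assoc_weight_log_dominated_def by blast
  }
  {
    assume "\<forall>l>0. \<exists>k A. k \<ge> l \<and> A \<ge> 1 \<and>
        (\<forall>\<alpha> j. M l (mi_succ \<alpha> j) \<le> A ^ (mi_len \<alpha> + 1) * M k \<alpha>)"
    then have "\<exists>k. l' \<le> k \<and> assoc_weight_log_dominated 1 (M k) (M l')" if "l' > 0" for l'
      using that pos by (meson assoc_weight_log_dominated_one order_less_le_trans)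
    from assoc_weight_log_dominated_iterate_up[OF this \<open>l > 0\<close>]
    show "\<exists>k A B. k \<ge> l \<and> A \<ge> 1 \<and> B \<ge> 1 \<and>
        (\<forall>t::real^'n. t \<noteq> 0 \<longrightarrow>
           assoc_weight (M k) t + ereal (real N * ln (norm t))
             \<le> assoc_weight (M l) (A *\<^sub>R t) + ereal B)"
      unfolding assoc_weight_log_dominated_def by blast
  }
qed

end
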